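(* For every integer $s\ge2$, with $m=(2^{2s}-1)/3$, $$\lambda(m,4^s)\ \ge\ \frac{2^{2s}-1}{2^{3s}-3\cdot 2^{s-1}+1}\left(\frac{2^{2s-1}+2^s-1}{3}+2^{s-1}\sqrt m\right).$$
   Context: For a real Banach space $X$ and finite-dimensional subspace $Y$, $\lambda(Y,X)=\inf\{\|P\|\}$ over bounded linear projections $P:X\to Y$ (i.e. $P|_Y=\mathrm{Id}_Y$). For integers $n\ge m$, $\lambda(m,n):=\sup\{\lambda(Y,\ell_\infty^{(n)}): Y\subset\ell_\infty^{(n)},\ \dim Y=m\}$, where $\ell_\infty^{(n)}$ is $\mathbb{R}^n$ with the max norm. *)

theory Defs
  imports "HOL-Analysis.Analysis"
begin

definition linf :: "real ^ 'n \<Rightarrow> real" where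
  "linf x = Max (range (\<lambda>i. \<bar>x $ i\<bar>))"

definition linf_opnorm :: "(real ^ 'n \<Rightarrow> real ^ 'n) \<Rightarrow> real" where
  "linf_opnorm P = Sup ((\<lambda>x. linf (P x)) ` {x. linf x \<le> 1})"

definition is_projection_onto :: "(real ^ 'n) set \<Rightarrow> (real ^ 'n \<Rightarrow> real ^ 'n) \<Rightarrow> bool" where
  "is_projection_onto Y P \<longleftrightarrow> linear P \<and> range P \<subseteq> Y \<and> (\<forall>y\<in>Y. P y = y)"

definition proj_const :: "(real ^ 'n) set \<Rightarrow> real" where
  "proj_const Y = Inf (linf_opnorm ` {P. is_projection_onto Y P})"

text \<open>lambda(m, n) where n = CARD('n).\<close>
definition max_proj_const :: "nat \<Rightarrow> 'n::finite itself \<Rightarrow> real" where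
  "max_proj_const m _ = Sup (proj_const ` {Y :: (real ^ 'n) set. subspace Y \<and> dim Y = m})"

end

theory Submission
  imports Defs
begin

text \<open>Index the coordinates of l_infinity^n, n = 4^s = k^2 with k = 2^s, by base-4 digit strings.
  Let H be the s-fold Kronecker power of a symmetric 4x4 Hadamard matrix and sigma a sign vector with
  H diag(sigma) H = -k (sigma sigma^T) o H (entrywise product). Matrices with off-diagonal
  entries H_xy f(sigma_x, sigma_y) and diagonal entries d(sigma_x) form an algebra, in which a
  suitable choice of f, d gives G with G^2 = (k/r)^2 G, r = sqrt m; then Y = range G has
  dimension trace G (r/k)^2 = m.
  Every projection Q onto Y has trace m, and a +-1 matrix E of the same shape together with
  probability weights w(sigma_x) satisfies E diag(w) G = mu G; averaging the rows of Q against E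
  bounds mu m by the norm of Q, and mu m is the stated constant.\<close>

section \<open>The max norm and the operator norm on l_infinity^n\<close>

lemma abs_le_linf: "\<bar>x $ i\<bar> \<le> linf x"
  unfolding linf_def by (rule Max_ge) auto

lemma linf_nonneg: "0 \<le> linf x"
  using abs_le_linf[of x undefined] by linarith

lemma linf_leI: "(\<And>i. \<bar>x $ i\<bar> \<le> c) \<Longrightarrow> linf x \<le> c"
  unfolding linf_def by (subst Max_le_iff) auto

lemma linf_0 [simp]: "linf 0 = 0"
  by (metis linf_leI linf_nonneg antisym abs_zero order_refl zero_index)

lemma linf_le_norm: "linf x \<le> norm x"
  by (rule linf_leI) (simp add: component_le_norm_cart)

lemma norm_le_sqrt_card_linf: "norm (x :: real^'n) \<le> sqrt (real CARD('n)) * linf x"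
proof -
  have "norm x = sqrt (\<Sum>i\<in>UNIV. (x $ i)^2)"
    by (simp add: norm_vec_def L2_set_def)
  also have "\<dots> \<le> sqrt (\<Sum>i\<in>(UNIV::'n set). (linf x)^2)"
    by (intro real_sqrt_le_mono sum_mono) (metis abs_le_linf abs_ge_zero power2_abs power_mono)
  also have "\<dots> = sqrt (real CARD('n)) * linf x"
    by (simp add: real_sqrt_mult linf_nonneg)
  finally show ?thesis .
qed

lemma bdd_above_linf_image_unit_ball:
  fixes P :: "real^'n \<Rightarrow> real^'n"
  assumes "linear P"
  shows "bdd_above ((\<lambda>x. linf (P x)) ` {x. linf x \<le> 1})"
proof -
  obtain B where B: "\<And>x. norm (P x) \<le> B * norm x"
    using linear_bounded[OF assms] by blast
  have "linf (P x) \<le> \<bar>B\<bar> * sqrt (real CARD('n))" if "linf x \<le> 1" for x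
  proof -
    have "linf (P x) \<le> \<bar>B\<bar> * norm x"
      by (meson B abs_ge_self linf_le_norm mult_right_mono norm_ge_zero order_trans)
    also have "\<dots> \<le> \<bar>B\<bar> * (sqrt (real CARD('n)) * linf x)"
      by (simp add: mult_left_mono norm_le_sqrt_card_linf)
    also have "\<dots> \<le> \<bar>B\<bar> * sqrt (real CARD('n))"
      using that by (intro mult_left_mono) (simp_all add: mult_left_le)
    finally show ?thesis .
  qed
  then show ?thesis by (auto simp: bdd_above_def)
qed

lemma linf_le_linf_opnorm:
  fixes P :: "real^'n \<Rightarrow> real^'n"
  shows "linear P \<Longrightarrow> linf x \<le> 1 \<Longrightarrow> linf (P x) \<le> linf_opnorm P"
  unfolding linf_opnorm_def by (rule cSup_upper) (auto simp: bdd_above_linf_image_unit_ball)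

lemma linf_opnorm_nonneg:
  fixes P :: "real^'n \<Rightarrow> real^'n"
  shows "linear P \<Longrightarrow> 0 \<le> linf_opnorm P"
  using linf_le_linf_opnorm[of P 0] by (simp add: linear_0)

lemma linf_opnorm_leI: "(\<And>x. linf x \<le> 1 \<Longrightarrow> linf (P x) \<le> C) \<Longrightarrow> linf_opnorm P \<le> C"
  unfolding linf_opnorm_def by (rule cSup_least) (auto intro: exI[of _ 0])

lemma row_abs_sum_le_linf_opnorm:
  fixes Q :: "real^'n \<Rightarrow> real^'n"
  assumes "linear Q"
  shows "(\<Sum>i\<in>UNIV. \<bar>matrix Q $ j $ i\<bar>) \<le> linf_opnorm Q"
proof -
  define z :: "real^'n" where "z = (\<chi> i. sgn (matrix Q $ j $ i))"
  have "linf z \<le> 1" unfolding z_def by (rule linf_leI) (simp add: abs_sgn_eq)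
  have "(\<Sum>i\<in>UNIV. \<bar>matrix Q $ j $ i\<bar>) = (matrix Q *v z) $ j"
    by (auto simp: matrix_vector_mult_def z_def sgn_if intro: sum.cong)
  also have "\<dots> \<le> linf (Q z)"
    using abs_le_linf[of "Q z" j] matrix_vector_mul(2)[OF assms] by (metis abs_ge_self order_trans)
  also have "\<dots> \<le> linf_opnorm Q" by (rule linf_le_linf_opnorm[OF assms \<open>linf z \<le> 1\<close>])
  finally show ?thesis .
qed

section \<open>Projections and the averaging bound\<close>

lemma orthogonal_basis_expansion:
  fixes B :: "'a::euclidean_space set"
  assumes "pairwise orthogonal B" and "y \<in> span B"
  shows "(\<Sum>b\<in>B. (b \<bullet> y / (b \<bullet> b)) *\<^sub>R b) = y"
proof -
  define d where "d = y - (\<Sum>b\<in>B. (b \<bullet> y / (b \<bullet> b)) *\<^sub>R b)"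
  have "d \<in> span B"
    unfolding d_def by (intro span_diff assms(2) span_sum span_mul span_base)
  then have "orthogonal d d"
    unfolding d_def by (rule Gram_Schmidt_step[OF assms(1)])
  then show ?thesis by (simp add: d_def orthogonal_self)
qed

lemma orthogonal_projection_exists:
  fixes Y :: "'a::euclidean_space set"
  assumes "subspace Y"
  obtains P where "linear P" "\<And>x. P x \<in> Y" "\<And>y. y \<in> Y \<Longrightarrow> P y = y"
    "\<And>x. norm (P x) \<le> norm x"
proof -
  obtain B where B: "B \<subseteq> Y" "pairwise orthogonal B" "span B = Y"
    using orthogonal_basis_subspace[OF assms] by metis
  define P where "P x = (\<Sum>b\<in>B. (b \<bullet> x / (b \<bullet> b)) *\<^sub>R b)" for x
  have "linear P"
    unfolding P_def
    by (rule linearI) (simp_all add: inner_add_right add_divide_distrib scaleR_add_left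
        sum.distrib scaleR_sum_right)
  moreover have range: "P x \<in> Y" for x
    unfolding P_def B(3)[symmetric] by (intro span_sum span_mul span_base)
  moreover have "P y = y" if "y \<in> Y" for y
    unfolding P_def using orthogonal_basis_expansion[OF B(2)] B(3) that by simp
  moreover have "norm (P x) \<le> norm x" for x
  proof -
    have "orthogonal (P x) (x - P x)"
      unfolding P_def by (rule Gram_Schmidt_step[OF B(2)]) (simp add: B(3) range[unfolded P_def])
    then have "(norm x)\<^sup>2 = (norm (P x))\<^sup>2 + (norm (x - P x))\<^sup>2"
      using norm_add_Pythagorean[of "P x" "x - P x"] by simp
    then show ?thesis
      by (simp add: power2_le_imp_le)
  qed
  ultimately show ?thesis using that by blast
qed

lemma orthogonal_projection_is_projection_onto:
  fixes Y :: "(real^'n) set"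
  assumes "subspace Y"
  obtains P where "is_projection_onto Y P" "\<And>x. norm (P x) \<le> norm x"
proof -
  obtain P where "linear P" "\<And>x. P x \<in> Y" "\<And>y. y \<in> Y \<Longrightarrow> P y = y"
    "\<And>x. norm (P x) \<le> norm x"
    using orthogonal_projection_exists[OF assms] by blast
  then show ?thesis
    using that[of P] unfolding is_projection_onto_def by blast
qed

lemma proj_const_le_sqrt_card:
  fixes Y :: "(real^'n) set"
  assumes "subspace Y"
  shows "proj_const Y \<le> sqrt (real CARD('n))"
proof -
  obtain P where P: "is_projection_onto Y P" and contr: "\<And>x. norm (P x) \<le> norm x"
    using orthogonal_projection_is_projection_onto[OF assms] by blast
  have "linf_opnorm P \<le> sqrt (real CARD('n))"
  proof (rule linf_opnorm_leI)
    fix x :: "real^'n"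
    assume "linf x \<le> 1"
    have "linf (P x) \<le> sqrt (real CARD('n)) * linf x"
      by (meson contr linf_le_norm norm_le_sqrt_card_linf order_trans)
    also have "\<dots> \<le> sqrt (real CARD('n))"
      using \<open>linf x \<le> 1\<close> by (simp add: mult_left_le)
    finally show "linf (P x) \<le> sqrt (real CARD('n))" .
  qed
  moreover have "proj_const Y \<le> linf_opnorm P"
    unfolding proj_const_def using P
    by (intro cInf_lower) (auto simp: bdd_below_def is_projection_onto_def intro!: exI[of _ 0] linf_opnorm_nonneg)
  ultimately show ?thesis by linarith
qed

lemma bdd_above_proj_const:
  "bdd_above (proj_const ` {Y :: (real^'n) set. subspace Y \<and> dim Y = m})"
  using proj_const_le_sqrt_card by (auto simp: bdd_above_def)

lemma trace_matrix_projection: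
  fixes Q :: "real^'n \<Rightarrow> real^'n"
  assumes Q: "is_projection_onto Y Q"
  shows "trace (matrix Q) = real (dim Y)"
proof -
  have lin: "linear Q" and range: "\<And>x. Q x \<in> Y" and id_on_Y: "\<And>y. y \<in> Y \<Longrightarrow> Q y = y"
    using Q by (auto simp: is_projection_onto_def)
  have "Y = range Q"
    using range id_on_Y by (auto, metis rangeI)
  then have "subspace Y" by (simp add: lin linear_subspace_image)
  then obtain B where B: "pairwise orthogonal B" "\<And>b. b \<in> B \<Longrightarrow> norm b = 1"
      "card B = dim Y" "span B = Y"
    using orthonormal_basis_subspace by metis
  have bb: "b \<bullet> b = 1" if "b \<in> B" for b
    using B(2)[OF that] by (simp add: dot_square_norm)
  have expand: "Q x = (\<Sum>b\<in>B. (b \<bullet> Q x) *\<^sub>R b)" for x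
    using orthogonal_basis_expansion[OF B(1), of "Q x"] range B(4) bb by simp
  have "trace (matrix Q) = (\<Sum>i\<in>UNIV. \<Sum>b\<in>B. (b \<bullet> Q (axis i 1)) * b $ i)"
    unfolding trace_def matrix_def by (subst expand) (simp add: sum_component)
  also have "\<dots> = (\<Sum>b\<in>B. b \<bullet> Q (\<Sum>i\<in>UNIV. b $ i *\<^sub>R axis i 1))"
    by (subst sum.swap) (simp add: linear_sum[OF lin] linear_scale[OF lin] inner_sum_right mult.commute)
  also have "\<dots> = (\<Sum>b\<in>B. b \<bullet> b)"
  proof -
    have "(\<Sum>i\<in>UNIV. b $ i *\<^sub>R axis i 1) = b" for b :: "real^'n"
      using basis_expansion[of b] by (simp add: scalar_mult_eq_scaleR)
    moreover have "Q b = b" if "b \<in> B" for b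
      using B(4) id_on_Y span_base that by blast
    ultimately show ?thesis by simp
  qed
  also have "\<dots> = (\<Sum>b\<in>B. 1)"
    using bb by simp
  also have "\<dots> = real (dim Y)" using B(3) by simp
  finally show ?thesis .
qed

text \<open>Every projection Q onto Y has trace dim Y, and the eigen-relation rewrites mu times that
  trace as a w-weighted average of signed row sums of the matrix of Q, each of which is at most
  the operator norm of Q.\<close>
lemma proj_const_ge_by_averaging:
  fixes Y :: "(real^'n) set" and E :: "'n \<Rightarrow> 'n \<Rightarrow> real" and w :: "'n \<Rightarrow> real"
  assumes "subspace Y"
    and E_bound: "\<And>i j. \<bar>E i j\<bar> \<le> 1"
    and w_nonneg: "\<And>j. 0 \<le> w j" and w_sum: "(\<Sum>j\<in>UNIV. w j) = 1"
    and eigen: "\<And>y i. y \<in> Y \<Longrightarrow> (\<Sum>j\<in>UNIV. E i j * w j * y $ j) = \<mu> * y $ i"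
  shows "\<mu> * real (dim Y) \<le> proj_const Y"
  unfolding proj_const_def
proof (rule cInf_greatest)
  show "linf_opnorm ` {P. is_projection_onto Y P} \<noteq> {}"
    using orthogonal_projection_is_projection_onto[OF \<open>subspace Y\<close>] by blast
next
  fix v assume "v \<in> linf_opnorm ` {P. is_projection_onto Y P}"
  then obtain Q where Q: "is_projection_onto Y Q" and v: "v = linf_opnorm Q" by auto
  have lin: "linear Q" and range: "\<And>x. Q x \<in> Y"
    using Q by (auto simp: is_projection_onto_def)
  have column: "matrix Q $ j $ i = Q (axis i 1) $ j" for i j
    by (simp add: matrix_def)
  have "\<mu> * real (dim Y) = \<mu> * (\<Sum>i\<in>UNIV. matrix Q $ i $ i)"
    using trace_matrix_projection[OF Q] by (simp add: trace_def)
  also have "\<dots> = (\<Sum>i\<in>UNIV. \<Sum>j\<in>UNIV. E i j * w j * matrix Q $ j $ i)"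
    by (simp add: column eigen[OF range] sum_distrib_left)
  also have "\<dots> = (\<Sum>j\<in>UNIV. w j * (\<Sum>i\<in>UNIV. E i j * matrix Q $ j $ i))"
    by (subst sum.swap) (simp add: sum_distrib_left algebra_simps)
  also have "\<dots> \<le> (\<Sum>j\<in>UNIV. w j * linf_opnorm Q)"
  proof (intro sum_mono mult_left_mono w_nonneg)
    fix j
    have "(\<Sum>i\<in>UNIV. E i j * matrix Q $ j $ i) \<le> (\<Sum>i\<in>UNIV. \<bar>matrix Q $ j $ i\<bar>)"
    proof (rule sum_mono)
      fix i
      have "E i j * matrix Q $ j $ i \<le> \<bar>E i j\<bar> * \<bar>matrix Q $ j $ i\<bar>"
        by (metis abs_ge_self abs_mult)
      also have "\<dots> \<le> \<bar>matrix Q $ j $ i\<bar>"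
        using E_bound[of i j] by (simp add: mult_left_le_one_le)
      finally show "E i j * matrix Q $ j $ i \<le> \<bar>matrix Q $ j $ i\<bar>" .
    qed
    also have "\<dots> \<le> linf_opnorm Q" by (rule row_abs_sum_le_linf_opnorm[OF lin])
    finally show "(\<Sum>i\<in>UNIV. E i j * matrix Q $ j $ i) \<le> linf_opnorm Q" .
  qed
  also have "\<dots> = linf_opnorm Q"
    using w_sum by (simp flip: sum_distrib_right)
  finally show "\<mu> * real (dim Y) \<le> v" using v by simp
qed

lemma scaled_idempotent_is_projection_onto_range:
  fixes G :: "real^'n^'n"
  assumes idem: "G ** G = c *\<^sub>R G" and "c \<noteq> 0"
  shows "is_projection_onto (range ((*v) G)) ((*v) ((1 / c) *\<^sub>R G))"
  unfolding is_projection_onto_def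
proof (intro conjI ballI subsetI)
  show "linear ((*v) ((1 / c) *\<^sub>R G))" by (rule matrix_vector_mul_linear)
next
  fix z assume "z \<in> range ((*v) ((1 / c) *\<^sub>R G))"
  then show "z \<in> range ((*v) G)"
    by (auto simp: scaleR_matrix_vector_assoc[symmetric] matrix_vector_mult_scaleR[symmetric]
        simp flip: matrix_scaleR_vector_ac)
next
  fix y assume "y \<in> range ((*v) G)"
  then obtain v where "y = G *v v" by auto
  have "((1 / c) *\<^sub>R G) *v y = (1 / c) *\<^sub>R ((G ** G) *v v)"
    by (metis scaleR_matrix_vector_assoc matrix_vector_mul_assoc \<open>y = G *v v\<close>)
  also have "\<dots> = y"
    using \<open>c \<noteq> 0\<close> by (metis idem scaleR_matrix_vector_assoc scaleR_scaleR
        nonzero_divide_eq_eq scaleR_one \<open>y = G *v v\<close>)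
  finally show "((1 / c) *\<^sub>R G) *v y = y" .
qed

lemma dim_range_scaled_idempotent:
  fixes G :: "real^'n^'n"
  assumes "G ** G = c *\<^sub>R G" and "c \<noteq> 0"
  shows "real (dim (range ((*v) G))) = trace G / c"
  using trace_matrix_projection[OF scaled_idempotent_is_projection_onto_range[OF assms]]
  by (simp add: trace_def sum_divide_distrib)

lemma proj_const_range_ge_by_averaging:
  fixes G :: "real^'n^'n" and E :: "'n \<Rightarrow> 'n \<Rightarrow> real" and w :: "'n \<Rightarrow> real"
  assumes "\<And>i j. \<bar>E i j\<bar> \<le> 1" and "\<And>j. 0 \<le> w j" and "(\<Sum>j\<in>UNIV. w j) = 1"
    and eigen: "\<And>i p. (\<Sum>j\<in>UNIV. E i j * w j * G $ j $ p) = \<mu> * G $ i $ p"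
  shows "\<mu> * real (dim (range ((*v) G))) \<le> proj_const (range ((*v) G))"
proof (rule proj_const_ge_by_averaging[OF _ assms(1-3)])
  show "subspace (range ((*v) G))"
    by (rule linear_subspace_image[OF matrix_vector_mul_linear subspace_UNIV])
next
  fix y i assume "y \<in> range ((*v) G)"
  then obtain v where "y = G *v v" by auto
  have "(\<Sum>j\<in>UNIV. E i j * w j * y $ j) = (\<Sum>j\<in>UNIV. \<Sum>p\<in>UNIV. E i j * w j * G $ j $ p * v $ p)"
    by (simp add: \<open>y = G *v v\<close> matrix_vector_mult_def sum_distrib_left mult.assoc)
  also have "\<dots> = (\<Sum>p\<in>UNIV. (\<Sum>j\<in>UNIV. E i j * w j * G $ j $ p) * v $ p)"
    by (subst sum.swap) (simp add: sum_distrib_right)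
  also have "\<dots> = (\<Sum>p\<in>UNIV. \<mu> * G $ i $ p * v $ p)"
    by (simp only: eigen)
  also have "\<dots> = \<mu> * y $ i"
    by (simp add: \<open>y = G *v v\<close> matrix_vector_mult_def sum_distrib_left mult.assoc)
  finally show "(\<Sum>j\<in>UNIV. E i j * w j * y $ j) = \<mu> * y $ i" .
qed

section \<open>Kronecker powers of a 4x4 Hadamard matrix\<close>

definition had4 :: "nat \<Rightarrow> nat \<Rightarrow> real" where
  "had4 a b = (-1) ^ (a mod 2 * (b div 2) + a div 2 * (b mod 2))"

definition bent4 :: "nat \<Rightarrow> real" where
  "bent4 d = (-1) ^ (d mod 2 * (d div 2))"

definition spike4 :: "nat \<Rightarrow> real" where
  "spike4 d = (if d = 0 then 1 else -1)"

lemma less_4_cases: "(a::nat) < 4 \<Longrightarrow> a = 0 \<or> a = 1 \<or> a = 2 \<or> a = 3"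
  by auto

lemma sum_lessThan_4: "(\<Sum>d<4::nat. f d) = f 0 + f 1 + f 2 + (f 3 :: real)"
  by (simp add: eval_nat_numeral)

lemma had4_mult_had4:
  "a < 4 \<Longrightarrow> b < 4 \<Longrightarrow> (\<Sum>d<4. had4 a d * had4 d b) = (if a = b then 4 else 0)"
  by (drule less_4_cases, drule less_4_cases) (auto simp: sum_lessThan_4 had4_def)

lemma had4_bent4_had4:
  "(\<Sum>d<4. had4 a d * bent4 d * had4 d b) = 2 * bent4 a * bent4 b * had4 a b" if "a < 4" "b < 4"
  using less_4_cases[OF that(1)] less_4_cases[OF that(2)]
  by (auto simp: sum_lessThan_4 had4_def bent4_def)

lemma had4_spike4_had4:
  "(\<Sum>d<4. had4 a d * spike4 d * had4 d b) = - 2 * spike4 a * spike4 b * had4 a b" if "a < 4" "b < 4"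
  using less_4_cases[OF that(1)] less_4_cases[OF that(2)]
  by (auto simp: sum_lessThan_4 had4_def spike4_def)

lemma four_power_eq_square: "(4::real)^n = (2^n)^2"
  by (metis power_mult_distrib power2_eq_square mult_2 numeral_Bit0)

lemma minus_one_power_cases: "(-1::real) ^ n = 1 \<or> (-1::real) ^ n = -1"
  by (cases "even n") auto

text \<open>Kronecker powers, reading indices as base-4 digit strings, least significant digit first.\<close>
primrec had :: "nat \<Rightarrow> nat \<Rightarrow> nat \<Rightarrow> real" where
  "had 0 x y = 1"
| "had (Suc j) x y = had4 (x mod 4) (y mod 4) * had j (x div 4) (y div 4)"

primrec bent :: "nat \<Rightarrow> nat \<Rightarrow> real" where
  "bent 0 x = 1"
| "bent (Suc j) x = bent4 (x mod 4) * bent j (x div 4)"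

text \<open>Index shift: sgn_pattern j, and had_pattern j below, live on the 4^(j+1) indices
  of had (Suc j).\<close>
definition sgn_pattern :: "nat \<Rightarrow> nat \<Rightarrow> real" where
  "sgn_pattern j x = spike4 (x mod 4) * bent j (x div 4)"

lemma had_sym: "had j x y = had j y x"
  by (induction j arbitrary: x y) (simp_all add: had4_def add.commute mult.commute)

lemma had_diag [simp]: "had j x x = 1"
  by (induction j arbitrary: x) (simp_all add: had4_def mult.commute)

lemma had_0_left [simp]: "had j 0 y = 1"
  by (induction j arbitrary: y) (simp_all add: had4_def)

lemma abs_had [simp]: "\<bar>had j x y\<bar> = 1"
  by (induction j arbitrary: x y) (simp_all add: had4_def abs_mult)

lemma bent_cases: "bent j x = 1 \<or> bent j x = -1"
  by (induction j arbitrary: x)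
    (simp_all add: bent4_def, metis minus_one_power_cases mult_1 mult_minus1 minus_minus)

lemma sgn_pattern_cases: "sgn_pattern j x = 1 \<or> sgn_pattern j x = -1"
  using bent_cases[of j "x div 4"] by (auto simp: sgn_pattern_def spike4_def)

lemma sgn_pattern_0 [simp]: "sgn_pattern j 0 = 1"
proof -
  have "bent j 0 = 1" by (induction j) (simp_all add: bent4_def)
  then show ?thesis by (simp add: sgn_pattern_def spike4_def)
qed

lemma sum_lessThan_4_power_Suc:
  fixes f :: "nat \<Rightarrow> real"
  shows "(\<Sum>z<4^Suc j. f z) = (\<Sum>z<4^j. \<Sum>d<4. f (d + z * 4))"
  unfolding power_Suc2 sum_mult_product ..

declare had.simps(2) [simp del]

lemma had_Suc_weighted_sum:
  "(\<Sum>z<4^Suc j. had (Suc j) x z * (u (z mod 4) * v (z div 4)) * had (Suc j) z y)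
    = (\<Sum>d<4. had4 (x mod 4) d * u d * had4 d (y mod 4))
      * (\<Sum>z<4^j. had j (x div 4) z * v z * had j z (y div 4))" (is "?lhs = ?rhs")
proof -
  have "?lhs = (\<Sum>z<4^j. \<Sum>d<4. had4 (x mod 4) d * u d * had4 d (y mod 4)
                      * (had j (x div 4) z * v z * had j z (y div 4)))"
    unfolding sum_lessThan_4_power_Suc by (intro sum.cong refl) (simp add: had.simps(2) algebra_simps)
  also have "\<dots> = ?rhs"
    unfolding sum_product by (rule sum.swap)
  finally show ?thesis .
qed

lemma had_mult_had:
  "x < 4^j \<Longrightarrow> y < 4^j \<Longrightarrow> (\<Sum>z<4^j. had j x z * had j z y) = (if x = y then 4^j else 0)"
proof (induction j arbitrary: x y)
  case 0
  then show ?case by simp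
next
  case (Suc j)
  have digits: "x div 4 < 4^j" "y div 4 < 4^j"
    using Suc.prems by (simp_all add: less_mult_imp_div_less)
  have eq_iff: "x = y \<longleftrightarrow> x mod 4 = y mod 4 \<and> x div 4 = y div 4"
    by (metis div_mult_mod_eq)
  have "(\<Sum>z<4^Suc j. had (Suc j) x z * had (Suc j) z y)
      = (\<Sum>d<4. had4 (x mod 4) d * had4 d (y mod 4)) * (\<Sum>z<4^j. had j (x div 4) z * had j z (y div 4))"
    using had_Suc_weighted_sum[of j x "\<lambda>_. 1" "\<lambda>_. 1" y] by simp
  also have "\<dots> = (if x = y then 4^Suc j else 0)"
    using had4_mult_had4[of "x mod 4" "y mod 4"] by (simp add: Suc.IH[OF digits] eq_iff)
  finally show ?case .
qed

lemma had_bent_had: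
  "(\<Sum>z<4^j. had j x z * bent j z * had j z y) = 2^j * bent j x * bent j y * had j x y"
proof (induction j arbitrary: x y)
  case 0
  then show ?case by simp
next
  case (Suc j)
  show ?case
    using had_Suc_weighted_sum[of j x bent4 "bent j" y]
    by (simp add: had4_bent4_had4 Suc.IH had.simps(2))
qed

lemma had_sgn_pattern_had:
  "(\<Sum>z<4^Suc j. had (Suc j) x z * sgn_pattern j z * had (Suc j) z y)
    = - (2^Suc j) * sgn_pattern j x * sgn_pattern j y * had (Suc j) x y"
  using had_Suc_weighted_sum[of j x spike4 "bent j" y]
  by (simp add: sgn_pattern_def had4_spike4_had4 had_bent_had had.simps(2))

lemma had_mult_fun_sgn_pattern_had:
  assumes "x < 4^Suc j" "y < 4^Suc j"
  shows "(\<Sum>z<4^Suc j. had (Suc j) x z * g (sgn_pattern j z) * had (Suc j) z y)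
    = (g 1 + g (-1)) / 2 * (if x = y then 4^Suc j else 0)
      - (g 1 - g (-1)) / 2 * 2^Suc j * sgn_pattern j x * sgn_pattern j y * had (Suc j) x y"
proof -
  have affine: "g (sgn_pattern j z) = (g 1 + g (-1)) / 2 + (g 1 - g (-1)) / 2 * sgn_pattern j z" for z
    using sgn_pattern_cases[of j z] by (auto simp: field_simps)
  have "(\<Sum>z<4^Suc j. had (Suc j) x z * g (sgn_pattern j z) * had (Suc j) z y)
      = (g 1 + g (-1)) / 2 * (\<Sum>z<4^Suc j. had (Suc j) x z * had (Suc j) z y)
        + (g 1 - g (-1)) / 2 * (\<Sum>z<4^Suc j. had (Suc j) x z * sgn_pattern j z * had (Suc j) z y)"
    unfolding affine sum_distrib_left sum.distrib[symmetric] by (intro sum.cong refl) (simp add: algebra_simps)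
  also have "\<dots> = (g 1 + g (-1)) / 2 * (if x = y then 4^Suc j else 0)
      + (g 1 - g (-1)) / 2 * (- (2^Suc j) * sgn_pattern j x * sgn_pattern j y * had (Suc j) x y)"
    by (simp only: had_mult_had[OF assms] had_sgn_pattern_had)
  finally show ?thesis by (simp add: algebra_simps)
qed

lemma sum_mult_add_deltas:
  fixes A B :: "'a \<Rightarrow> real"
  assumes "finite S" "x \<in> S" "y \<in> S"
  shows "(\<Sum>z\<in>S. (A z + (if z = x then e else 0)) * (B z + (if z = y then f else 0)))
       = (\<Sum>z\<in>S. A z * B z) + e * B x + f * A y + (if x = y then e * f else 0)"
proof -
  have "(\<Sum>z\<in>S. (A z + (if z = x then e else 0)) * (B z + (if z = y then f else 0)))
      = (\<Sum>z\<in>S. A z * B z) + (\<Sum>z\<in>S. if z = x then e * B z else 0)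
        + (\<Sum>z\<in>S. if z = y then f * A z else 0)
        + (\<Sum>z\<in>S. if z = x then (if x = y then e * f else 0) else 0)"
    by (simp only: sum.distrib[symmetric]) (intro sum.cong refl, auto simp: algebra_simps)
  also have "\<dots> = (\<Sum>z\<in>S. A z * B z) + e * B x + f * A y + (if x = y then e * f else 0)"
    using assms by (simp only: sum.delta) simp
  finally show ?thesis .
qed

definition had_pattern ::
    "nat \<Rightarrow> (real \<Rightarrow> real \<Rightarrow> real) \<Rightarrow> (real \<Rightarrow> real) \<Rightarrow> nat \<Rightarrow> nat \<Rightarrow> real" where
  "had_pattern j f d x y =
    had (Suc j) x y * f (sgn_pattern j x) (sgn_pattern j y) + (if x = y then d (sgn_pattern j x) else 0)"

lemma had_pattern_mult:
  assumes "x < 4^Suc j" "y < 4^Suc j" and k: "k = 2^Suc j"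
  shows "(\<Sum>z<4^Suc j. had_pattern j f a x z * had_pattern j g b z y)
    = had_pattern j
        (\<lambda>u v. a u * g u v + f u v * b v - k / 2 * u * v * (f u 1 * g 1 v - f u (-1) * g (-1) v))
        (\<lambda>u. k^2 / 2 * (f u 1 * g 1 u + f u (-1) * g (-1) u) + a u * b u) x y"
proof -
  let ?u = "sgn_pattern j x" and ?v = "sgn_pattern j y" and ?H = "had (Suc j)"
  have k2: "k^2 = 4^Suc j"
    unfolding k four_power_eq_square ..
  have left: "had_pattern j f a x z = ?H x z * f ?u (sgn_pattern j z) + (if z = x then a ?u else 0)" for z
    by (auto simp: had_pattern_def)
  have right: "had_pattern j g b z y = ?H z y * g (sgn_pattern j z) ?v + (if z = y then b ?v else 0)" for z
    by (auto simp: had_pattern_def)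
  have "(\<Sum>z<4^Suc j. had_pattern j f a x z * had_pattern j g b z y)
      = (\<Sum>z<4^Suc j. ?H x z * (\<lambda>t. f ?u t * g t ?v) (sgn_pattern j z) * ?H z y)
        + a ?u * (?H x y * g ?u ?v) + b ?v * (?H x y * f ?u ?v) + (if x = y then a ?u * b ?v else 0)"
    unfolding left right using assms(1,2)
    by (subst sum_mult_add_deltas) (auto simp: algebra_simps)
  also have "\<dots> = had_pattern j
        (\<lambda>u v. a u * g u v + f u v * b v - k / 2 * u * v * (f u 1 * g 1 v - f u (-1) * g (-1) v))
        (\<lambda>u. k^2 / 2 * (f u 1 * g 1 u + f u (-1) * g (-1) u) + a u * b u) x y"
    unfolding had_mult_fun_sgn_pattern_had[OF assms(1,2), of "\<lambda>t. f ?u t * g t ?v"]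
      k2 [symmetric] k [symmetric]
    by (auto simp: had_pattern_def field_simps)
  finally show ?thesis .
qed

lemma had_pattern_eqI:
  assumes "\<And>u v. u \<in> {1, -1} \<Longrightarrow> v \<in> {1, -1} \<Longrightarrow> f u v = c * f' u v"
    and "\<And>u. u \<in> {1, -1} \<Longrightarrow> f u u + d u = c * (f' u u + d' u)"
  shows "had_pattern j f d x y = c * had_pattern j f' d' x y"
  using assms sgn_pattern_cases[of j x] sgn_pattern_cases[of j y]
  by (cases "x = y") (auto simp: had_pattern_def)

lemma had_pattern_mult_weight:
  "had_pattern j f d x z * w (sgn_pattern j z) = had_pattern j (\<lambda>u v. f u v * w v) (\<lambda>u. d u * w u) x z"
  by (auto simp: had_pattern_def algebra_simps)

section \<open>The extremal subspace\<close>

definition sign_coeff :: "real \<Rightarrow> real \<Rightarrow> real" where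
  "sign_coeff u v = (if u = -1 \<and> v = -1 then -1 else 1)"

definition signs :: "nat \<Rightarrow> nat \<Rightarrow> nat \<Rightarrow> real" where
  "signs j = had_pattern j sign_coeff (\<lambda>u. 1 - sign_coeff u u)"

lemma abs_signs: "\<bar>signs j x y\<bar> = 1"
  by (auto simp: signs_def had_pattern_def sign_coeff_def abs_mult)

text \<open>In the application k = 2^s and r = sqrt m, where m = (k^2 - 1)/3 is the dimension of the
  extremal subspace.\<close>
locale extremal_construction =
  fixes k r :: real
  assumes k_gt_2: "2 < k" and r_pos: "0 < r" and r_sq: "3 * r^2 = k^2 - 1"
begin

definition gram_coeff :: "real \<Rightarrow> real \<Rightarrow> real" where
  "gram_coeff u v =
    (if u = 1 \<and> v = 1 then 1 / (k + 1) else if u = -1 \<and> v = -1 then - 1 / (k - 1) else 1 / r)"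

definition weight :: "real \<Rightarrow> real" where
  "weight t = (if t = 1 then k * (k + 1) / 2 - (2 + k / 2) * r else k * (k - 1) / 2 - k / 2 * r)"

definition total_weight :: real where
  "total_weight = (weight 1 + weight (-1)) / 2 * k^2 - (weight 1 - weight (-1)) / 2 * k"

definition eigenvalue :: real where
  "eigenvalue = weight 1 * k / 2 + weight (-1) * k * (k + 1) / (2 * r)"

lemma gram_coeff_equations:
  "gram_coeff 1 1 * (k + 1) = 1" "gram_coeff (-1) (-1) * (k - 1) = -1"
  "gram_coeff 1 (-1) * r = 1" "gram_coeff (-1) 1 * r = 1"
  using k_gt_2 r_pos by (auto simp: gram_coeff_def)

definition gram :: "nat \<Rightarrow> nat \<Rightarrow> nat \<Rightarrow> real" where
  "gram j = had_pattern j gram_coeff (\<lambda>u. 1 - gram_coeff u u)"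

lemma gram_diag [simp]: "gram j x x = 1"
  by (simp add: gram_def had_pattern_def)

lemma gram_mult_gram:
  assumes "k = 2^Suc j" "x < 4^Suc j" "y < 4^Suc j"
  shows "(\<Sum>z<4^Suc j. gram j x z * gram j z y) = (k / r)^2 * gram j x y"
  unfolding gram_def had_pattern_mult[OF assms(2,3,1)] power_divide
proof (rule had_pattern_eqI)
  fix u v :: real assume "u \<in> {1, -1}" "v \<in> {1, -1}"
  then show "(1 - gram_coeff u u) * gram_coeff u v + gram_coeff u v * (1 - gram_coeff v v)
      - k / 2 * u * v * (gram_coeff u 1 * gram_coeff 1 v - gram_coeff u (-1) * gram_coeff (-1) v)
      = k^2 / r^2 * gram_coeff u v"
    using gram_coeff_equations r_sq r_pos by (auto simp: field_simps) algebra+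
next
  fix u :: real assume "u \<in> {1, -1}"
  then show "(1 - gram_coeff u u) * gram_coeff u u + gram_coeff u u * (1 - gram_coeff u u)
      - k / 2 * u * u * (gram_coeff u 1 * gram_coeff 1 u - gram_coeff u (-1) * gram_coeff (-1) u)
      + (k^2 / 2 * (gram_coeff u 1 * gram_coeff 1 u + gram_coeff u (-1) * gram_coeff (-1) u)
         + (1 - gram_coeff u u) * (1 - gram_coeff u u))
      = k^2 / r^2 * (gram_coeff u u + (1 - gram_coeff u u))"
    using gram_coeff_equations r_sq r_pos by (auto simp: field_simps) algebra+
qed

lemma weight_equations:
  "weight 1 = k * (k + 1) / 2 - (2 + k / 2) * r" "weight (-1) = k * (k - 1) / 2 - k / 2 * r"
  "eigenvalue * (2 * r) = weight 1 * k * r + weight (-1) * k * (k + 1)"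
  using r_pos by (auto simp: weight_def eigenvalue_def field_simps)

lemma signs_weight_gram:
  assumes "k = 2^Suc j" "x < 4^Suc j" "y < 4^Suc j"
  shows "(\<Sum>z<4^Suc j. signs j x z * weight (sgn_pattern j z) * gram j z y) = eigenvalue * gram j x y"
  unfolding signs_def gram_def had_pattern_mult_weight had_pattern_mult[OF assms(2,3,1)]
proof (rule had_pattern_eqI)
  fix u v :: real assume "u \<in> {1, -1}" "v \<in> {1, -1}"
  then show "(1 - sign_coeff u u) * weight u * gram_coeff u v
      + sign_coeff u v * weight v * (1 - gram_coeff v v)
      - k / 2 * u * v * (sign_coeff u 1 * weight 1 * gram_coeff 1 v
                         - sign_coeff u (-1) * weight (-1) * gram_coeff (-1) v)
      = eigenvalue * gram_coeff u v"
    using gram_coeff_equations weight_equations r_sq r_pos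
    by (auto simp: sign_coeff_def field_simps) algebra+
next
  fix u :: real assume "u \<in> {1, -1}"
  then show "(1 - sign_coeff u u) * weight u * gram_coeff u u
      + sign_coeff u u * weight u * (1 - gram_coeff u u)
      - k / 2 * u * u * (sign_coeff u 1 * weight 1 * gram_coeff 1 u
                         - sign_coeff u (-1) * weight (-1) * gram_coeff (-1) u)
      + (k^2 / 2 * (sign_coeff u 1 * weight 1 * gram_coeff 1 u
                    + sign_coeff u (-1) * weight (-1) * gram_coeff (-1) u)
         + (1 - sign_coeff u u) * weight u * (1 - gram_coeff u u))
      = eigenvalue * (gram_coeff u u + (1 - gram_coeff u u))"
    using gram_coeff_equations weight_equations r_sq r_pos
    by (auto simp: sign_coeff_def field_simps) algebra+
qed

lemma sum_weight_sgn_pattern: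
  assumes "k = 2^Suc j"
  shows "(\<Sum>z<4^Suc j. weight (sgn_pattern j z)) = total_weight"
proof -
  have "k^2 = 4^Suc j"
    unfolding assms four_power_eq_square ..
  have "(\<Sum>z<4^Suc j. weight (sgn_pattern j z))
      = (\<Sum>z<4^Suc j. had (Suc j) 0 z * weight (sgn_pattern j z) * had (Suc j) z 0)"
    by (simp add: had_sym[of _ _ 0])
  also have "\<dots> = (weight 1 + weight (-1)) / 2 * 4^Suc j - (weight 1 - weight (-1)) / 2 * 2^Suc j"
    by (simp only: had_mult_fun_sgn_pattern_had[of 0 j 0] zero_less_power zero_less_numeral) simp
  also have "\<dots> = total_weight"
    by (simp only: total_weight_def flip: \<open>k^2 = 4^Suc j\<close> assms)
  finally show ?thesis .
qed

lemma weight_nonneg: "0 \<le> weight t"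
proof -
  have "r \<le> k - 1"
  proof (rule power2_le_imp_le)
    have "3 * (k - 1)^2 - 3 * r^2 = 2 * (k - 1) * (k - 2)"
      using r_sq by algebra
    moreover have "0 \<le> 2 * (k - 1) * (k - 2)"
      using k_gt_2 by simp
    ultimately show "r^2 \<le> (k - 1)^2" by linarith
  qed (use k_gt_2 in simp)
  then have "0 \<le> weight (-1)"
    using k_gt_2 mult_left_mono[of r "k - 1" k] by (simp add: weight_def algebra_simps)
  moreover have "r * (k + 4) \<le> k * (k + 1)"
  proof (rule power2_le_imp_le)
    have "3 * (k * (k + 1))^2 - 3 * (r * (k + 4))^2 = 2 * (k + 1) * (k - 2)^2 * (k + 2)"
      using r_sq by algebra
    moreover have "0 \<le> 2 * (k + 1) * (k - 2)^2 * (k + 2)"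
      using k_gt_2 by simp
    ultimately show "(r * (k + 4))^2 \<le> (k * (k + 1))^2" by linarith
  qed (use k_gt_2 in simp)
  then have "0 \<le> weight 1"
    by (simp add: weight_def algebra_simps)
  ultimately show ?thesis
    by (cases "t = 1") (simp_all add: weight_def)
qed

lemma total_weight_pos: "0 < total_weight"
proof -
  have "r * (k^2 + 2 * k - 2) < k * (k^2 - 1)"
  proof (rule power_less_imp_less_base)
    have "3 * (k * (k^2 - 1))^2 - 3 * (r * (k^2 + 2 * k - 2))^2
        = (k^2 - 1) * ((k - 2) * (2 * k^3 - 3 * k + 2))"
      using r_sq by algebra
    moreover have "0 < (k^2 - 1) * ((k - 2) * (2 * k^3 - 3 * k + 2))"
    proof -
      have "3 < k * k"
        using mult_strict_mono[of 2 k 2 k] k_gt_2 by simp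
      moreover have "3 * k < k^3"
        using \<open>3 < k * k\<close> k_gt_2 mult_strict_right_mono[of 3 "k * k" k] by (simp add: power3_eq_cube)
      ultimately show ?thesis
        using k_gt_2 by (intro mult_pos_pos) (simp_all add: power2_eq_square)
    qed
    ultimately show "(r * (k^2 + 2 * k - 2))^2 < (k * (k^2 - 1))^2" by linarith
  qed (use k_gt_2 in simp)
  then have "0 < k / 2 * (k * (k^2 - 1) - r * (k^2 + 2 * k - 2))"
    using k_gt_2 by simp
  also have "\<dots> = total_weight"
    by (simp add: total_weight_def weight_def power2_eq_square field_simps)
  finally show ?thesis .
qed

lemma eigenvalue_ratio:
  "eigenvalue / total_weight * r^2
    = (k^2 - 1) / (k^3 - 3 * (k / 2) + 1) * ((k^2 / 2 + k - 1) / 3 + k / 2 * r)"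
proof -
  have "3 * k < k^3"
    using k_gt_2 mult_strict_mono[of 2 k 2 k] mult_strict_right_mono[of 3 "k * k" k]
    by (simp add: power3_eq_cube)
  then have denom: "0 < k^3 - 3 * (k / 2) + 1"
    using k_gt_2 by simp
  have "eigenvalue * r^2 * (k^3 - 3 * (k / 2) + 1)
      = (k^2 - 1) * ((k^2 / 2 + k - 1) / 3 + k / 2 * r) * total_weight"
    unfolding total_weight_def eigenvalue_def weight_def
    using r_pos r_sq by (simp add: field_simps) algebra
  then show ?thesis
    using denom total_weight_pos by (simp add: field_simps)
qed

lemma subspace_with_proj_const_ge:
  assumes k: "k = 2^Suc j" and card: "CARD('n::finite) = 4^Suc j"
  obtains Y :: "(real^'n) set"
  where "subspace Y" "real (dim Y) = r^2" "eigenvalue / total_weight * r^2 \<le> proj_const Y"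
proof -
  obtain h :: "'n \<Rightarrow> nat" where h: "bij_betw h UNIV {..<4^Suc j}"
    using finite_same_card_bij[of "UNIV :: 'n set" "{..<(4::nat)^Suc j}"] card by auto
  have h_less: "h i < 4^Suc j" for i
    using h by (auto simp: bij_betw_def)
  have reindex: "(\<Sum>l\<in>UNIV. f (h l)) = (\<Sum>z<4^Suc j. f z)" for f :: "nat \<Rightarrow> real"
    by (rule sum.reindex_bij_betw[OF h])
  define G :: "real^'n^'n" where "G = (\<chi> i l. gram j (h i) (h l))"
  have "G ** G = (k / r)^2 *\<^sub>R G"
    using gram_mult_gram[OF k h_less h_less]
    by (simp add: G_def matrix_matrix_mult_def vec_eq_iff reindex[of "\<lambda>z. gram j (h _) z * gram j z (h _)"])
  moreover have "(k / r)^2 \<noteq> 0"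
    using r_pos k_gt_2 by simp
  moreover have "trace G = k^2"
  proof -
    have "trace G = real CARD('n)" by (simp add: G_def trace_def)
    then show ?thesis using card by (simp add: k four_power_eq_square)
  qed
  ultimately have dim: "real (dim (range ((*v) G))) = r^2"
    using dim_range_scaled_idempotent[of G "(k / r)^2"] r_pos k_gt_2 by (simp add: power_divide)
  define w where "w l = weight (sgn_pattern j (h l)) / total_weight" for l
  have "eigenvalue / total_weight * real (dim (range ((*v) G))) \<le> proj_const (range ((*v) G))"
  proof (rule proj_const_range_ge_by_averaging)
    show "\<bar>signs j (h i) (h l)\<bar> \<le> 1" for i l
      by (simp add: abs_signs)
    show "0 \<le> w l" for l
      using weight_nonneg total_weight_pos by (simp add: w_def)
    show "(\<Sum>l\<in>UNIV. w l) = 1"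
      using reindex[of "\<lambda>z. weight (sgn_pattern j z)"] sum_weight_sgn_pattern[OF k] total_weight_pos
      by (simp add: w_def flip: sum_divide_distrib)
    show "(\<Sum>l\<in>UNIV. signs j (h i) (h l) * w l * G $ l $ p) = eigenvalue / total_weight * G $ i $ p" for i p
      using reindex[of "\<lambda>z. signs j (h i) z * weight (sgn_pattern j z) * gram j z (h p)"]
        signs_weight_gram[OF k h_less h_less]
      by (simp add: w_def G_def flip: sum_divide_distrib)
  qed
  then show ?thesis
    using that[of "range ((*v) G)"] dim
    by (simp add: linear_subspace_image[OF matrix_vector_mul_linear subspace_UNIV])
qed


lemma max_proj_const_ge:
  assumes "k = 2^Suc j" and "CARD('n::finite) = 4^Suc j" and "real m = r^2"
  shows "eigenvalue / total_weight * r^2 \<le> max_proj_const m TYPE('n)"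
proof -
  obtain Y :: "(real^'n) set"
    where Y: "subspace Y" "real (dim Y) = r^2" "eigenvalue / total_weight * r^2 \<le> proj_const Y"
    by (rule subspace_with_proj_const_ge[OF assms(1,2)])
  then have "dim Y = m"
    using assms(3) by (simp only: flip: of_nat_eq_iff)
  then have "proj_const Y \<le> max_proj_const m TYPE('n)"
    unfolding max_proj_const_def using Y(1) by (intro cSup_upper bdd_above_proj_const) auto
  then show ?thesis
    using Y(3) by linarith
qed

end

lemma real_four_power_minus_one_div_3:
  "real (((2::nat)^(2 * s) - 1) div 3) = ((2::real)^(2 * s) - 1) / 3"
proof -
  have "(4::nat)^s mod 3 = 1"
    by (induction s) (simp_all add: mod_mult_right_eq[symmetric])
  then obtain q where q: "(4::nat)^s = 3 * q + 1"
    by (metis div_mult_mod_eq mult.commute)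
  then have "(4::real)^s = 3 * real q + 1"
    using arg_cong[OF q, of real] by simp
  moreover have "(2::nat)^(2 * s) = 4^s" "(2::real)^(2 * s) = 4^s"
    by (simp_all add: power_mult)
  ultimately show ?thesis
    using q by simp
qed

lemma bound_in_terms_of_two_power:
  fixes s :: nat
  assumes "1 \<le> s"
  defines "k \<equiv> (2::real)^s"
  shows "(2 ^ (2 * s) - 1) / (2 ^ (3 * s) - 3 * 2 ^ (s - 1) + 1)
        * ((2 ^ (2 * s - 1) + 2 ^ s - 1) / 3 + 2 ^ (s - 1) * sqrt (real (((2::nat) ^ (2 * s) - 1) div 3)))
     = (k^2 - 1) / (k^3 - 3 * (k / 2) + 1) * ((k^2 / 2 + k - 1) / 3 + k / 2 * sqrt ((k^2 - 1) / 3))"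
proof -
  have pow: "(2::real)^(2 * s) = k^2" "(2::real)^(3 * s) = k^3" "(2::real)^s = k"
    by (simp_all add: k_def power_mult mult.commute)
  moreover have "(2::real)^(s - 1) = k / 2" "(2::real)^(2 * s - 1) = k^2 / 2"
    using assms(1) pow(1) by (simp_all add: k_def power_diff)
  ultimately show ?thesis
    unfolding real_four_power_minus_one_div_3 by (simp only:)
qed

theorem mainTheorem6:
  fixes s :: nat
  assumes "s \<ge> 2" and "CARD('n::finite) = 4 ^ s"
  shows "max_proj_const (((2::nat) ^ (2 * s) - 1) div 3) (TYPE('n))
     \<ge> (2 ^ (2 * s) - 1) / (2 ^ (3 * s) - 3 * 2 ^ (s - 1) + 1)
        * ((2 ^ (2 * s - 1) + 2 ^ s - 1) / 3
           + 2 ^ (s - 1) * sqrt (real (((2::nat) ^ (2 * s) - 1) div 3)))"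
proof -
  obtain j where s: "s = Suc j" using assms(1) by (cases s) auto
  define k :: real where "k = 2^s"
  define r where "r = sqrt ((k^2 - 1) / 3)"
  have "2 < k"
    using power_strict_increasing[of 1 s "2::real"] assms(1) by (simp add: k_def)
  moreover have "1 < k^2"
    using mult_strict_mono[of 1 k 1 k] \<open>2 < k\<close> by (simp add: power2_eq_square)
  ultimately interpret extremal_construction k r
    by unfold_locales (simp_all add: r_def)
  have "k^2 = (2::real)^(2 * s)"
    by (simp add: k_def power_mult mult.commute)
  then have "real (((2::nat) ^ (2 * s) - 1) div 3) = r^2"
    unfolding real_four_power_minus_one_div_3 r_def using \<open>1 < k^2\<close> by simp
  then have "eigenvalue / total_weight * r^2 \<le> max_proj_const (((2::nat) ^ (2 * s) - 1) div 3) TYPE('n)"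
    by (rule max_proj_const_ge[OF k_def[unfolded s] assms(2)[unfolded s]])
  moreover have "eigenvalue / total_weight * r^2
      = (2 ^ (2 * s) - 1) / (2 ^ (3 * s) - 3 * 2 ^ (s - 1) + 1)
        * ((2 ^ (2 * s - 1) + 2 ^ s - 1) / 3 + 2 ^ (s - 1) * sqrt (real (((2::nat) ^ (2 * s) - 1) div 3)))"
    unfolding eigenvalue_ratio unfolding r_def k_def
    using assms(1) by (intro bound_in_terms_of_two_power[symmetric]) simp
  ultimately show ?thesis
    by simp
qed

end
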